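(* Let $k$ be a kernel on a space $\mathcal X$, let $x_1,\dots,x_n \in \mathcal X$, let $\hat{\mathbb P}_n = \frac1n\sum_i\delta_{x_i}$, and let $K$ be the kernel matrix $K_{ij} = k(x_i,x_j)$, assumed invertible. Let $\ell_f:\mathcal X\to\mathbb R$ and let $\vec\ell \in \mathbb R^n$ have entries $\vec\ell_i = \ell_f(x_i)$. Let $\epsilon>0$ and consider the problem $$\sup_{w\in\mathbb R^n} \sum_{i=1}^n w_i \ell_f(x_i) \quad\text{s.t.}\quad d_{\mathrm{MMD}}\Big(\sum_{i=1}^n w_i\delta_{x_i}, \hat{\mathbb P}_n\Big) \leq \epsilon,\ \ \sum_{i=1}^n w_i = 1,\ \ w_i \geq 0\ \forall i.$$ If $\epsilon$ is small enough that the constraints $w_i \geq 0$ are not active, then the optimal value of this problem is $$\mathbb{E}_{x\sim\hat{\mathbb P}_n}[\ell_f(x)] + \epsilon\sqrt{\vec\ell^T K^{-1}\vec\ell - \frac{(\vec\ell^T K^{-1}\mathbf 1)^2}{\mathbf 1^T K^{-1}\mathbf 1}}.$$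
   Context: For weights $w$, $d_{\mathrm{MMD}}(\sum_i w_i\delta_{x_i},\hat{\mathbb P}_n) = \|\sum_i (w_i - \tfrac1n) k(x_i,\cdot)\|_{\mathcal H}$, so its square equals $(w-\frac1n\mathbf 1)^T K (w - \frac1n\mathbf 1)$. "The constraints $w_i\ge 0$ are not active" means the optimal value is unchanged when these constraints are dropped. $\mathbf 1$ is the all-ones vector and $\mathbb{E}_{x\sim\hat{\mathbb P}_n}[\ell_f(x)] = \frac1n\sum_i \ell_f(x_i)$. *)

theory Defs
  imports "HOL-Analysis.Analysis"
begin

definition is_kernel :: "('a \<Rightarrow> 'a \<Rightarrow> real) \<Rightarrow> bool" where
  "is_kernel k \<longleftrightarrow> (\<forall>x y. k x y = k y x) \<and>
     (\<forall>(xs::'a list) (c::nat \<Rightarrow> real).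
        0 \<le> (\<Sum>i<length xs. \<Sum>j<length xs. c i * c j * k (xs ! i) (xs ! j)))"

definition kernel_matrix :: "('a \<Rightarrow> 'a \<Rightarrow> real) \<Rightarrow> ('n::finite \<Rightarrow> 'a) \<Rightarrow> real^'n^'n" where
  "kernel_matrix k x = (\<chi> i j. k (x i) (x j))"

text \<open>MMD between sum_i w_i delta_{x_i} and the empirical measure (1/n) sum_i delta_{x_i}:
  the RKHS norm of sum_i (w_i - 1/n) k(x_i,.), i.e. sqrt of (w - 1/n 1)^T K (w - 1/n 1).\<close>
definition d_mmd :: "('a \<Rightarrow> 'a \<Rightarrow> real) \<Rightarrow> ('n::finite \<Rightarrow> 'a) \<Rightarrow> real^'n \<Rightarrow> real" where
  "d_mmd k x w = (let v = w - (\<chi> i. 1 / real CARD('n)) in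
                  sqrt (v \<bullet> (kernel_matrix k x *v v)))"

definition feas_relaxed :: "('a \<Rightarrow> 'a \<Rightarrow> real) \<Rightarrow> ('n::finite \<Rightarrow> 'a) \<Rightarrow> real \<Rightarrow> (real^'n) set" where
  "feas_relaxed k x \<epsilon> = {w. d_mmd k x w \<le> \<epsilon> \<and> (\<Sum>i\<in>UNIV. w $ i) = 1}"

definition feas :: "('a \<Rightarrow> 'a \<Rightarrow> real) \<Rightarrow> ('n::finite \<Rightarrow> 'a) \<Rightarrow> real \<Rightarrow> (real^'n) set" where
  "feas k x \<epsilon> = {w. d_mmd k x w \<le> \<epsilon> \<and> (\<Sum>i\<in>UNIV. w $ i) = 1 \<and> (\<forall>i. 0 \<le> w $ i)}"

definition objective :: "('a \<Rightarrow> real) \<Rightarrow> ('n::finite \<Rightarrow> 'a) \<Rightarrow> real^'n \<Rightarrow> real" where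
  "objective l x w = (\<Sum>i\<in>UNIV. w $ i * l (x i))"

end

theory Submission
  imports Defs
begin

(* Substituting v = w - 1/n, the relaxed problem maximises v \<bullet> l over the slice
   {v. v\<^sup>T K v \<le> \<epsilon>\<^sup>2, 1 \<bullet> v = 0} of a K-ellipsoid. On the hyperplane 1 \<bullet> v = 0 the vector l may
   be replaced by l - t 1, and t = (l\<^sup>T K\<^sup>-\<^sup>1 1) / (1\<^sup>T K\<^sup>-\<^sup>1 1) is the shift for which
   g = K\<^sup>-\<^sup>1 (l - t 1) lies in the hyperplane itself. Then v \<bullet> l = v\<^sup>T K g, which by
   Cauchy-Schwarz for the K-inner product is at most \<epsilon> sqrt (g\<^sup>T K g), with equality at
   v = \<epsilon> g / sqrt (g\<^sup>T K g); expanding g\<^sup>T K g gives the stated expression. *)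

lemma matrix_inv_right:
  assumes "invertible A"
  shows "A ** matrix_inv A = mat 1"
  using someI_ex[OF assms[unfolded invertible_def]] by (simp add: matrix_inv_def)

lemma matrix_inv_left:
  assumes "invertible A"
  shows "matrix_inv A ** A = mat 1"
  using someI_ex[OF assms[unfolded invertible_def]] by (simp add: matrix_inv_def)

lemma matrix_vector_mul_matrix_inv:
  assumes "invertible A"
  shows "A *v (matrix_inv A *v y) = y"
  by (simp add: matrix_vector_mul_assoc matrix_inv_right[OF assms])

lemma invertible_matrix_inv:
  assumes "invertible A"
  shows "invertible (matrix_inv A)"
  unfolding invertible_def using matrix_inv_left[OF assms] matrix_inv_right[OF assms] by blast

lemma matrix_inv_symmetric:
  fixes A :: "'a::comm_semiring_1^'n^'n"
  assumes "invertible A" and "transpose A = A"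
  shows "transpose (matrix_inv A) = matrix_inv A"
proof -
  have "transpose (matrix_inv A) ** A = mat 1"
    using matrix_transpose_mul[of A "matrix_inv A"] by (simp add: assms matrix_inv_right)
  then have "transpose (matrix_inv A) = transpose (matrix_inv A) ** (A ** matrix_inv A)"
    by (simp add: matrix_inv_right[OF assms(1)])
  also have "\<dots> = matrix_inv A"
    by (simp add: matrix_mul_assoc \<open>transpose (matrix_inv A) ** A = mat 1\<close>)
  finally show ?thesis .
qed

locale psd_matrix =
  fixes K :: "real^'n^'n"
  assumes symmetric: "transpose K = K"
    and quadratic_form_nonneg: "0 \<le> c \<bullet> (K *v c)"
begin

lemma bilinear_commute: "y \<bullet> (K *v z) = z \<bullet> (K *v y)"
  by (metis dot_lmul_matrix inner_commute symmetric vector_transpose_matrix)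

lemma quadratic_form_add_scaleR:
  "(y + s *\<^sub>R z) \<bullet> (K *v (y + s *\<^sub>R z))
     = y \<bullet> (K *v y) + 2 * s * (y \<bullet> (K *v z)) + s\<^sup>2 * (z \<bullet> (K *v z))"
  using bilinear_commute[of z y]
  by (simp add: matrix_vector_right_distrib matrix_vector_mult_scaleR inner_add_left
      inner_add_right algebra_simps power2_eq_square)

lemma quadratic_form_eq_0_imp:
  assumes "z \<bullet> (K *v z) = 0"
  shows "K *v z = 0"
proof -
  define y where "y = K *v z"
  define s where "s = - (y \<bullet> (K *v y) + 1) / (2 * (y \<bullet> (K *v z)))"
  have "y \<bullet> (K *v z) = 0"
  proof (rule ccontr)
    assume "y \<bullet> (K *v z) \<noteq> 0"
    have "0 \<le> (y + s *\<^sub>R z) \<bullet> (K *v (y + s *\<^sub>R z))" by (rule quadratic_form_nonneg)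
    also have "\<dots> = y \<bullet> (K *v y) + 2 * s * (y \<bullet> (K *v z))"
      using assms by (simp add: quadratic_form_add_scaleR)
    also have "\<dots> = -1" using \<open>y \<bullet> (K *v z) \<noteq> 0\<close> by (simp add: s_def field_simps)
    finally show False by simp
  qed
  then show ?thesis by (simp add: y_def)
qed

lemma cauchy_schwarz: "(y \<bullet> (K *v z))\<^sup>2 \<le> (y \<bullet> (K *v y)) * (z \<bullet> (K *v z))"
proof (cases "z \<bullet> (K *v z) = 0")
  case True
  then show ?thesis by (simp add: quadratic_form_eq_0_imp)
next
  case False
  define b where "b = z \<bullet> (K *v z)"
  have "b > 0" using quadratic_form_nonneg[of z] False b_def by simp
  define s where "s = - (y \<bullet> (K *v z)) / b"
  have "0 \<le> (y + s *\<^sub>R z) \<bullet> (K *v (y + s *\<^sub>R z))" by (rule quadratic_form_nonneg)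
  also have "\<dots> = y \<bullet> (K *v y) + 2 * s * (y \<bullet> (K *v z)) + s\<^sup>2 * b"
    by (simp add: quadratic_form_add_scaleR b_def)
  also have "\<dots> = y \<bullet> (K *v y) - (y \<bullet> (K *v z))\<^sup>2 / b"
    using \<open>b > 0\<close> by (simp add: s_def field_simps power2_eq_square)
  finally have "(y \<bullet> (K *v z))\<^sup>2 / b \<le> y \<bullet> (K *v y)" by simp
  then show ?thesis using \<open>b > 0\<close> by (simp add: b_def divide_le_eq)
qed

lemma bilinear_le_sqrt: "y \<bullet> (K *v z) \<le> sqrt (y \<bullet> (K *v y)) * sqrt (z \<bullet> (K *v z))"
  by (metis cauchy_schwarz real_le_rsqrt real_sqrt_mult)

end

lemma psd_matrix_kernel_matrix:
  fixes k :: "'a \<Rightarrow> 'a \<Rightarrow> real" and x :: "'n::finite \<Rightarrow> 'a"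
  assumes "is_kernel k"
  shows "psd_matrix (kernel_matrix k x)"
proof
  show "transpose (kernel_matrix k x) = kernel_matrix k x"
    using assms by (simp add: is_kernel_def kernel_matrix_def transpose_def vec_eq_iff)
next
  fix c :: "real^'n"
  obtain xs :: "'n list" where "distinct xs" and "set xs = UNIV"
    using finite_distinct_list[of "UNIV::'n set"] by auto
  then have bij: "bij_betw ((!) xs) {..<length xs} UNIV"
    using bij_betw_nth by fastforce
  have "0 \<le> (\<Sum>i<length xs. \<Sum>j<length xs. c $ (xs ! i) * c $ (xs ! j) * k (x (xs ! i)) (x (xs ! j)))"
    using assms unfolding is_kernel_def
    by (auto dest: spec[of _ "map x xs"] spec[of _ "\<lambda>i. c $ (xs ! i)"])
  also have "\<dots> = (\<Sum>i<length xs. \<Sum>j\<in>UNIV. c $ (xs ! i) * c $ j * k (x (xs ! i)) (x j))"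
    by (intro sum.cong refl sum.reindex_bij_betw[OF bij])
  also have "\<dots> = (\<Sum>i\<in>UNIV. \<Sum>j\<in>UNIV. c $ i * c $ j * k (x i) (x j))"
    by (rule sum.reindex_bij_betw[OF bij])
  also have "\<dots> = c \<bullet> (kernel_matrix k x *v c)"
    by (simp add: kernel_matrix_def inner_vec_def matrix_vector_mult_def sum_distrib_left mult_ac)
  finally show "0 \<le> c \<bullet> (kernel_matrix k x *v c)" .
qed

definition dual_norm_sq_on_hyperplane :: "real^'n^'n \<Rightarrow> real^'n \<Rightarrow> real^'n \<Rightarrow> real" where
  "dual_norm_sq_on_hyperplane K h L =
     L \<bullet> (matrix_inv K *v L) - (L \<bullet> (matrix_inv K *v h))\<^sup>2 / (h \<bullet> (matrix_inv K *v h))"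

locale invertible_psd_matrix = psd_matrix +
  assumes invertible: "invertible K"
begin

lemma quadratic_form_pos:
  assumes "c \<noteq> 0"
  shows "0 < c \<bullet> (K *v c)"
proof -
  have "K *v c \<noteq> 0"
    using assms by (metis invertible matrix_left_invertible_ker matrix_inv_left)
  then have "c \<bullet> (K *v c) \<noteq> 0"
    using quadratic_form_eq_0_imp by blast
  then show ?thesis
    using quadratic_form_nonneg[of c] by (simp add: order_less_le)
qed

lemma invertible_psd_matrix_inverse: "invertible_psd_matrix (matrix_inv K)"
proof
  show "transpose (matrix_inv K) = matrix_inv K"
    by (rule matrix_inv_symmetric[OF invertible symmetric])
  show "invertible (matrix_inv K)"
    by (rule invertible_matrix_inv[OF invertible])
  fix c
  have "c \<bullet> (matrix_inv K *v c) = (matrix_inv K *v c) \<bullet> (K *v (matrix_inv K *v c))"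
    by (simp add: matrix_vector_mul_matrix_inv[OF invertible] inner_commute)
  then show "0 \<le> c \<bullet> (matrix_inv K *v c)"
    by (simp add: quadratic_form_nonneg)
qed

lemma representer_on_hyperplane:
  assumes "h \<noteq> 0"
  obtains g where "h \<bullet> g = 0" and "\<And>v. h \<bullet> v = 0 \<Longrightarrow> v \<bullet> L = v \<bullet> (K *v g)"
    and "g \<bullet> (K *v g) = dual_norm_sq_on_hyperplane K h L"
proof -
  define M where "M = matrix_inv K"
  interpret M: invertible_psd_matrix M
    unfolding M_def by (rule invertible_psd_matrix_inverse)
  define b where "b = h \<bullet> (M *v h)"
  have "b > 0"
    unfolding b_def using M.quadratic_form_pos[OF assms] .
  define t where "t = (L \<bullet> (M *v h)) / b"
  define g where "g = M *v (L - t *\<^sub>R h)"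
  have Kg: "K *v g = L - t *\<^sub>R h"
    by (simp add: g_def M_def matrix_vector_mul_matrix_inv invertible)
  show ?thesis
  proof
    have "h \<bullet> g = (L - t *\<^sub>R h) \<bullet> (M *v h)"
      unfolding g_def by (rule M.bilinear_commute)
    also have "\<dots> = 0"
      using \<open>b > 0\<close> by (simp add: inner_diff_left t_def b_def)
    finally show "h \<bullet> g = 0" .
  next
    fix v
    assume "h \<bullet> v = 0"
    then show "v \<bullet> L = v \<bullet> (K *v g)"
      by (simp add: Kg inner_diff_right inner_commute)
  next
    have "L \<bullet> (M *v h) = h \<bullet> (M *v L)"
      by (rule M.bilinear_commute)
    have "g \<bullet> (K *v g) = (L - t *\<^sub>R h) \<bullet> (M *v (L - t *\<^sub>R h))"
      unfolding Kg by (simp add: g_def inner_commute)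
    also have "\<dots> = L \<bullet> (M *v L) - 2 * t * (L \<bullet> (M *v h)) + t\<^sup>2 * b"
      using \<open>L \<bullet> (M *v h) = h \<bullet> (M *v L)\<close>
      by (simp add: b_def matrix_vector_mult_diff_distrib matrix_vector_mult_scaleR
          inner_diff_left inner_diff_right algebra_simps power2_eq_square)
    also have "\<dots> = dual_norm_sq_on_hyperplane K h L"
      using \<open>b > 0\<close>
      by (simp add: dual_norm_sq_on_hyperplane_def t_def b_def M_def field_simps power2_eq_square)
    finally show "g \<bullet> (K *v g) = dual_norm_sq_on_hyperplane K h L" .
  qed
qed

lemma linear_le_on_ellipsoid_hyperplane:
  assumes "h \<noteq> 0" and "0 \<le> \<epsilon>" and "v \<bullet> (K *v v) \<le> \<epsilon>\<^sup>2" and "h \<bullet> v = 0"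
  shows "v \<bullet> L \<le> \<epsilon> * sqrt (dual_norm_sq_on_hyperplane K h L)"
proof -
  obtain g where "\<And>v. h \<bullet> v = 0 \<Longrightarrow> v \<bullet> L = v \<bullet> (K *v g)"
    and g_norm: "g \<bullet> (K *v g) = dual_norm_sq_on_hyperplane K h L"
    using representer_on_hyperplane[OF \<open>h \<noteq> 0\<close>] by blast
  then have "v \<bullet> L = v \<bullet> (K *v g)"
    using \<open>h \<bullet> v = 0\<close> by blast
  also have "\<dots> \<le> sqrt (v \<bullet> (K *v v)) * sqrt (g \<bullet> (K *v g))"
    by (rule bilinear_le_sqrt)
  also have "\<dots> \<le> \<epsilon> * sqrt (g \<bullet> (K *v g))"
    using assms(2,3) quadratic_form_nonneg[of g] by (intro mult_right_mono real_le_lsqrt) auto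
  finally show ?thesis
    unfolding g_norm .
qed

lemma linear_attains_on_ellipsoid_hyperplane:
  assumes "h \<noteq> 0" and "0 \<le> \<epsilon>"
  obtains v where "v \<bullet> (K *v v) \<le> \<epsilon>\<^sup>2" and "h \<bullet> v = 0"
    and "v \<bullet> L = \<epsilon> * sqrt (dual_norm_sq_on_hyperplane K h L)"
proof -
  obtain g where "h \<bullet> g = 0" and g_repr: "\<And>v. h \<bullet> v = 0 \<Longrightarrow> v \<bullet> L = v \<bullet> (K *v g)"
    and g_norm: "g \<bullet> (K *v g) = dual_norm_sq_on_hyperplane K h L"
    using representer_on_hyperplane[OF \<open>h \<noteq> 0\<close>] by blast
  define G where "G = g \<bullet> (K *v g)"
  show ?thesis
  proof (cases "G = 0")
    case True
    show ?thesis
      by (rule that[of 0]) (use True assms(2) g_norm G_def in auto)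
  next
    case False
    then have "G > 0"
      using quadratic_form_nonneg[of g] by (simp add: G_def order_less_le)
    define v where "v = (\<epsilon> / sqrt G) *\<^sub>R g"
    have "v \<bullet> (K *v v) = (\<epsilon> / sqrt G)\<^sup>2 * G"
      by (simp add: v_def G_def matrix_vector_mult_scaleR power2_eq_square)
    also have "\<dots> = \<epsilon>\<^sup>2"
      using \<open>G > 0\<close> by (simp add: power_divide)
    finally have "v \<bullet> (K *v v) = \<epsilon>\<^sup>2" .
    moreover have "h \<bullet> v = 0"
      using \<open>h \<bullet> g = 0\<close> by (simp add: v_def)
    moreover have "v \<bullet> L = \<epsilon> * sqrt G"
    proof -
      have "v \<bullet> L = \<epsilon> / sqrt G * G"
        using g_repr[OF \<open>h \<bullet> v = 0\<close>] by (simp add: v_def G_def)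
      also have "\<dots> = \<epsilon> * sqrt G"
        using \<open>G > 0\<close> by (simp add: field_simps flip: power2_eq_square)
      finally show ?thesis .
    qed
    ultimately show ?thesis
      using that g_norm G_def by force
  qed
qed

lemma SUP_linear_on_ellipsoid_affine_slice:
  assumes "h \<bullet> u = 1" and "0 \<le> \<epsilon>"
  shows "(SUP w\<in>{w. (w - u) \<bullet> (K *v (w - u)) \<le> \<epsilon>\<^sup>2 \<and> h \<bullet> w = 1}. w \<bullet> L)
           = u \<bullet> L + \<epsilon> * sqrt (dual_norm_sq_on_hyperplane K h L)"
proof -
  have "h \<noteq> 0"
    using assms(1) by auto
  show ?thesis
  proof (rule cSup_eq_maximum)
    obtain v where "v \<bullet> (K *v v) \<le> \<epsilon>\<^sup>2" and "h \<bullet> v = 0"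
      and "v \<bullet> L = \<epsilon> * sqrt (dual_norm_sq_on_hyperplane K h L)"
      using linear_attains_on_ellipsoid_hyperplane[OF \<open>h \<noteq> 0\<close> assms(2)] by blast
    then show "u \<bullet> L + \<epsilon> * sqrt (dual_norm_sq_on_hyperplane K h L)
                 \<in> (\<lambda>w. w \<bullet> L) ` {w. (w - u) \<bullet> (K *v (w - u)) \<le> \<epsilon>\<^sup>2 \<and> h \<bullet> w = 1}"
      using assms(1) by (intro image_eqI[of _ _ "u + v"]) (auto simp: inner_add_left inner_add_right)
  next
    fix y
    assume "y \<in> (\<lambda>w. w \<bullet> L) ` {w. (w - u) \<bullet> (K *v (w - u)) \<le> \<epsilon>\<^sup>2 \<and> h \<bullet> w = 1}"
    then obtain w where "y = w \<bullet> L" and "(w - u) \<bullet> (K *v (w - u)) \<le> \<epsilon>\<^sup>2" and "h \<bullet> w = 1"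
      by blast
    then have "(w - u) \<bullet> L \<le> \<epsilon> * sqrt (dual_norm_sq_on_hyperplane K h L)"
      using \<open>h \<noteq> 0\<close> assms
      by (intro linear_le_on_ellipsoid_hyperplane) (auto simp: inner_diff_right)
    then show "y \<le> u \<bullet> L + \<epsilon> * sqrt (dual_norm_sq_on_hyperplane K h L)"
      using \<open>y = w \<bullet> L\<close> by (simp add: inner_diff_left)
  qed
qed

end

theorem lemma3:
  fixes k :: "'a \<Rightarrow> 'a \<Rightarrow> real" and x :: "'n::finite \<Rightarrow> 'a"
    and l :: "'a \<Rightarrow> real" and \<epsilon> :: real
  assumes "is_kernel k"
    and "invertible (kernel_matrix k x)"
    and "\<epsilon> > 0"
    and inactive: "(SUP w\<in>feas k x \<epsilon>. objective l x w) = (SUP w\<in>feas_relaxed k x \<epsilon>. objective l x w)"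
  shows "(SUP w\<in>feas k x \<epsilon>. objective l x w) =
     (\<Sum>i\<in>UNIV. l (x i)) / real CARD('n) +
     \<epsilon> * sqrt (let Ki = matrix_inv (kernel_matrix k x); lv = (\<chi> i. l (x i)); one = ((\<chi> i. 1) :: real^'n) in
        lv \<bullet> (Ki *v lv) - (lv \<bullet> (Ki *v one))\<^sup>2 / (one \<bullet> (Ki *v one)))"
proof -
  define K where "K = kernel_matrix k x"
  define L where "L = ((\<chi> i. l (x i)) :: real^'n)"
  define one where "one = ((\<chi> i. 1) :: real^'n)"
  define u where "u = ((\<chi> i. 1 / real CARD('n)) :: real^'n)"
  interpret invertible_psd_matrix K
    using psd_matrix_kernel_matrix[OF assms(1)] assms(2)
    by (simp add: K_def invertible_psd_matrix_def invertible_psd_matrix_axioms_def)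
  have relaxed: "feas_relaxed k x \<epsilon> = {w. (w - u) \<bullet> (K *v (w - u)) \<le> \<epsilon>\<^sup>2 \<and> one \<bullet> w = 1}"
    using \<open>\<epsilon> > 0\<close>
    by (auto simp: feas_relaxed_def d_mmd_def K_def u_def one_def inner_vec_def
        intro: real_le_lsqrt dest: sqrt_le_D)
  have objective: "objective l x = (\<lambda>w. w \<bullet> L)"
    by (simp add: fun_eq_iff objective_def L_def inner_vec_def)
  have "one \<bullet> u = 1" and mean: "u \<bullet> L = (\<Sum>i\<in>UNIV. l (x i)) / real CARD('n)"
    by (simp_all add: one_def u_def L_def inner_vec_def sum_divide_distrib)
  then have "(SUP w\<in>feas_relaxed k x \<epsilon>. objective l x w)
               = u \<bullet> L + \<epsilon> * sqrt (dual_norm_sq_on_hyperplane K one L)"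
    unfolding relaxed objective
    using \<open>\<epsilon> > 0\<close> by (intro SUP_linear_on_ellipsoid_affine_slice) auto
  then show ?thesis
    unfolding inactive mean[symmetric] dual_norm_sq_on_hyperplane_def K_def L_def one_def Let_def .
qed

end
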